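(* Let $u\in\mathcal F$ be a feasible flow. Then $u$ is implementable (i.e., there exists $\lambda\in\mathbb{R}^J_{\geq 0}$ with $u\in\mathrm{WE}(\lambda)$) if and only if $u$ is an optimal solution of the linear program \[ \min_{x\in\mathcal F}\ \sum_{(i,p)\in\mathcal P}\tau_{i,p}(u)\, x_{i,p}\quad\text{s.t.}\quad \sum_{(i,p)\in\mathcal P} g_{i,p,j}(u)\, x_{i,p}\le G_j(u)\ \text{ for all } j\in J. \]
   Context: Let $G=(V,E)$ be a directed graph and $I$ a finite set of commodities; commodity $i$ has source $s_i$, sink $t_i$ and demand $d_i>0$. $\mathcal P_i$ is the set of simple $s_i$–$t_i$ paths and $\mathcal P=\{(i,p): i\in I, p\in\mathcal P_i\}$. A flow is $x\in\mathbb{R}^{\mathcal P}_{\ge 0}$; it is feasible if $\sum_{p\in\mathcal P_i}x_{i,p}=d_i$ for all $i$; $\mathcal F$ is the set of feasible flows. $J$ is a finite set of externality classes with externality functions $g_{i,p,j}:\mathcal F\to\mathbb{R}_{\ge 0}$, and $G_j(x)=\sum_{(i,p)\in\mathcal P}g_{i,p,j}(x)\,x_{i,p}$. Travel time functions $\tau_{i,p}:\mathcal F\to\mathbb{R}$ are arbitrary. For $\lambda\in\mathbb{R}^J_{\ge0}$ the cost is $c^\lambda_{i,p}(x)=\tau_{i,p}(x)+\sum_{j\in J}\lambda_j g_{i,p,j}(x)$. A feasible flow $x$ is a Wardrop equilibrium w.r.t. $c^\lambda$ if for all $i\in I$, $p\in\mathcal P_i$: $x_{i,p}>0$ implies $c^\lambda_{i,p}(x)\le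 c^\lambda_{i,q}(x)$ for all $q\in\mathcal P_i$. $\mathrm{WE}(\lambda)$ denotes the set of such equilibria. *)

theory Defs
  imports Complex_Main
begin

definition simple_path :: "('v \<times> 'v) set \<Rightarrow> 'v \<Rightarrow> 'v \<Rightarrow> 'v list \<Rightarrow> bool" where
  "simple_path E s t p \<longleftrightarrow> p \<noteq> [] \<and> hd p = s \<and> last p = t \<and> distinct p \<and>
     (\<forall>k. Suc k < length p \<longrightarrow> (p ! k, p ! Suc k) \<in> E)"

definition paths :: "('v \<times> 'v) set \<Rightarrow> 'v \<Rightarrow> 'v \<Rightarrow> 'v list set" where
  "paths E s t = {p. simple_path E s t p}"

definition Pset :: "'i set \<Rightarrow> ('v \<times> 'v) set \<Rightarrow> ('i \<Rightarrow> 'v) \<Rightarrow> ('i \<Rightarrow> 'v) \<Rightarrow> ('i \<times> 'v list) set" where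
  "Pset I E s t = {(i, p). i \<in> I \<and> p \<in> paths E (s i) (t i)}"

text \<open>A flow in R^P is represented by a function on all pairs that vanishes outside P.\<close>
definition feasible ::
  "'i set \<Rightarrow> ('v \<times> 'v) set \<Rightarrow> ('i \<Rightarrow> 'v) \<Rightarrow> ('i \<Rightarrow> 'v) \<Rightarrow> ('i \<Rightarrow> real)
   \<Rightarrow> ('i \<times> 'v list \<Rightarrow> real) \<Rightarrow> bool" where
  "feasible I E s t d x \<longleftrightarrow>
     (\<forall>ip \<in> Pset I E s t. x ip \<ge> 0) \<and> (\<forall>ip. ip \<notin> Pset I E s t \<longrightarrow> x ip = 0) \<and>
     (\<forall>i \<in> I. (\<Sum>p \<in> paths E (s i) (t i). x (i, p)) = d i)"

definition Gext ::
  "('i \<times> 'v list) set \<Rightarrow> ('i \<times> 'v list \<Rightarrow> 'j \<Rightarrow> ('i \<times> 'v list \<Rightarrow> real) \<Rightarrow> real)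
   \<Rightarrow> 'j \<Rightarrow> ('i \<times> 'v list \<Rightarrow> real) \<Rightarrow> real" where
  "Gext P g j x = (\<Sum>ip \<in> P. g ip j x * x ip)"

definition cost ::
  "'j set \<Rightarrow> ('i \<times> 'v list \<Rightarrow> ('i \<times> 'v list \<Rightarrow> real) \<Rightarrow> real)
   \<Rightarrow> ('i \<times> 'v list \<Rightarrow> 'j \<Rightarrow> ('i \<times> 'v list \<Rightarrow> real) \<Rightarrow> real)
   \<Rightarrow> ('j \<Rightarrow> real) \<Rightarrow> 'i \<times> 'v list \<Rightarrow> ('i \<times> 'v list \<Rightarrow> real) \<Rightarrow> real" where
  "cost J tau g lam ip x = tau ip x + (\<Sum>j \<in> J. lam j * g ip j x)"

definition wardrop ::
  "'i set \<Rightarrow> ('v \<times> 'v) set \<Rightarrow> ('i \<Rightarrow> 'v) \<Rightarrow> ('i \<Rightarrow> 'v) \<Rightarrow> ('i \<Rightarrow> real) \<Rightarrow> 'j set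
   \<Rightarrow> ('i \<times> 'v list \<Rightarrow> ('i \<times> 'v list \<Rightarrow> real) \<Rightarrow> real)
   \<Rightarrow> ('i \<times> 'v list \<Rightarrow> 'j \<Rightarrow> ('i \<times> 'v list \<Rightarrow> real) \<Rightarrow> real)
   \<Rightarrow> ('j \<Rightarrow> real) \<Rightarrow> ('i \<times> 'v list \<Rightarrow> real) \<Rightarrow> bool" where
  "wardrop I E s t d J tau g lam x \<longleftrightarrow> feasible I E s t d x \<and>
     (\<forall>i \<in> I. \<forall>p \<in> paths E (s i) (t i). x (i, p) > 0 \<longrightarrow>
        (\<forall>q \<in> paths E (s i) (t i). cost J tau g lam (i, p) x \<le> cost J tau g lam (i, q) x))"

definition implementable where
  "implementable I E s t d J tau g u \<longleftrightarrow>
     (\<exists>lam :: 'j \<Rightarrow> real. (\<forall>j \<in> J. lam j \<ge> 0) \<and> wardrop I E s t d J tau g lam u)"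

definition lp_optimal where
  "lp_optimal I E s t d J tau g u \<longleftrightarrow>
     (let P = Pset I E s t;
          admissible = (\<lambda>x. feasible I E s t d x \<and>
             (\<forall>j \<in> J. (\<Sum>ip \<in> P. g ip j u * x ip) \<le> Gext P g j u))
      in admissible u \<and>
         (\<forall>x. admissible x \<longrightarrow> (\<Sum>ip \<in> P. tau ip u * u ip) \<le> (\<Sum>ip \<in> P. tau ip u * x ip)))"

end

theory Submission
  imports Defs
begin

text \<open>Implementability of \<open>u\<close> means that the finite linear system
  \<open>cost J tau g \<lambda> (i, p) u \<le> cost J tau g \<lambda> (i, q) u\<close>, for all paths \<open>p, q\<close> of a commodity \<open>i\<close>
  with \<open>u (i, p) > 0\<close>, has a solution \<open>\<lambda> \<ge> 0\<close>. Given one, pricing paths by this cost shows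
  that \<open>u\<close> is optimal: \<open>u\<close> only uses cheapest paths, and \<open>\<lambda> \<ge> 0\<close> penalises the externality
  constraints. Otherwise Farkas' lemma, a consequence of Fourier--Motzkin elimination, yields
  weights \<open>v \<ge> 0\<close> on the triples \<open>(i, p, q)\<close> such that shifting \<open>\<epsilon> v(i, p, q)\<close> units of flow from
  \<open>p\<close> to \<open>q\<close> respects every externality constraint and strictly lowers the objective; for
  small \<open>\<epsilon> > 0\<close> the shifted flow is feasible, contradicting optimality.\<close>

section \<open>Farkas' lemma\<close>

definition ineqs_solvable :: "'j set \<Rightarrow> 'k set \<Rightarrow> ('k \<Rightarrow> ('j \<Rightarrow> real) \<times> real) \<Rightarrow> bool" where
  "ineqs_solvable J K row \<longleftrightarrow> (\<exists>lam. \<forall>k\<in>K. (\<Sum>j\<in>J. fst (row k) j * lam j) \<le> snd (row k))"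

definition row_cone :: "'k set \<Rightarrow> ('k \<Rightarrow> ('j \<Rightarrow> real) \<times> real) \<Rightarrow> (('j \<Rightarrow> real) \<times> real) set" where
  "row_cone K row =
     {((\<lambda>j. \<Sum>k\<in>K. y k * fst (row k) j), (\<Sum>k\<in>K. y k * snd (row k))) | y. \<forall>k\<in>K. 0 \<le> y k}"

lemma row_cone_pair:
  assumes "finite K" "k1 \<in> K" "k2 \<in> K" "0 \<le> \<alpha>" "0 \<le> \<beta>"
  shows "((\<lambda>j. \<alpha> * fst (row k1) j + \<beta> * fst (row k2) j), \<alpha> * snd (row k1) + \<beta> * snd (row k2))
           \<in> row_cone K row"
proof -
  define y where "y k = (if k = k1 then \<alpha> else 0) + (if k = k2 then \<beta> else 0)" for k
  have "(\<Sum>k\<in>K. y k * f k) = \<alpha> * f k1 + \<beta> * f k2" for f :: "'a \<Rightarrow> real"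
    using assms
    by (simp add: y_def distrib_right sum.distrib if_distrib[of "\<lambda>x. x * _"] sum.delta' cong: if_cong)
  then show ?thesis
    using assms unfolding row_cone_def by (intro CollectI exI[of _ y]) (auto simp: y_def)
qed

lemma row_in_row_cone: "finite K \<Longrightarrow> k \<in> K \<Longrightarrow> row k \<in> row_cone K row"
  using row_cone_pair[of K k k 1 0 row] by simp

lemma row_cone_trans:
  fixes row :: "'k \<Rightarrow> ('j \<Rightarrow> real) \<times> real"
  assumes "\<forall>s\<in>S. row' s \<in> row_cone K row"
  shows "row_cone S row' \<subseteq> row_cone K row"
proof
  fix c assume "c \<in> row_cone S row'"
  then obtain z where z: "\<forall>s\<in>S. 0 \<le> z s"
    and c: "c = ((\<lambda>j. \<Sum>s\<in>S. z s * fst (row' s) j), (\<Sum>s\<in>S. z s * snd (row' s)))"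
    by (auto simp: row_cone_def)
  have "\<forall>s\<in>S. \<exists>w. (\<forall>k\<in>K. 0 \<le> w k) \<and>
      row' s = ((\<lambda>j. \<Sum>k\<in>K. w k * fst (row k) j), (\<Sum>k\<in>K. w k * snd (row k)))"
    using assms by (auto simp: row_cone_def)
  from bchoice[OF this] obtain w where w: "\<forall>s\<in>S. (\<forall>k\<in>K. 0 \<le> w s k) \<and>
      row' s = ((\<lambda>j. \<Sum>k\<in>K. w s k * fst (row k) j), (\<Sum>k\<in>K. w s k * snd (row k)))"
    by blast
  have comb: "(\<Sum>s\<in>S. z s * (\<Sum>k\<in>K. w s k * f k)) = (\<Sum>k\<in>K. (\<Sum>s\<in>S. z s * w s k) * f k)"
    for f :: "'k \<Rightarrow> real"
    by (simp add: sum_distrib_left sum_distrib_right mult.assoc sum.swap[of _ S K])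
  have "c = ((\<lambda>j. \<Sum>k\<in>K. (\<Sum>s\<in>S. z s * w s k) * fst (row k) j),
            (\<Sum>k\<in>K. (\<Sum>s\<in>S. z s * w s k) * snd (row k)))"
    unfolding c comb[symmetric] using w by (auto intro!: sum.cong)
  moreover have "\<forall>k\<in>K. 0 \<le> (\<Sum>s\<in>S. z s * w s k)"
    using z w by (simp add: sum_nonneg)
  ultimately show "c \<in> row_cone K row"
    unfolding row_cone_def by (intro CollectI exI[of _ "\<lambda>k. \<Sum>s\<in>S. z s * w s k"]) simp
qed

lemma exists_between_finite:
  fixes f g :: "'a \<Rightarrow> real"
  assumes "finite A" "finite B" "\<forall>a\<in>A. \<forall>b\<in>B. f a \<le> g b"
  shows "\<exists>t. (\<forall>a\<in>A. f a \<le> t) \<and> (\<forall>b\<in>B. t \<le> g b)"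
proof (cases "A = {}")
  case True
  then show ?thesis
    using assms(2) by (cases "B = {}") (auto intro!: exI[of _ "Min (g ` B)"])
next
  case False
  then show ?thesis
    using assms by (auto intro!: exI[of _ "Max (f ` A)"] Max.boundedI)
qed

definition fm_combine ::
  "'j \<Rightarrow> ('j \<Rightarrow> real) \<times> real \<Rightarrow> ('j \<Rightarrow> real) \<times> real \<Rightarrow> ('j \<Rightarrow> real) \<times> real" where
  "fm_combine j p n =
     ((\<lambda>i. - fst n j * fst p i + fst p j * fst n i), - fst n j * snd p + fst p j * snd n)"

definition fm_elim :: "'j \<Rightarrow> (('j \<Rightarrow> real) \<times> real) set \<Rightarrow> (('j \<Rightarrow> real) \<times> real) set" where
  "fm_elim j R = {r \<in> R. fst r j = 0} \<union>
     (\<lambda>(p, n). fm_combine j p n) ` ({p \<in> R. 0 < fst p j} \<times> {n \<in> R. fst n j < 0})"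

lemma finite_fm_elim: "finite R \<Longrightarrow> finite (fm_elim j R)"
  by (simp add: fm_elim_def)

lemma fm_elim_coeff_eq_0: "r \<in> fm_elim j R \<Longrightarrow> fst r j = 0"
  by (auto simp: fm_elim_def fm_combine_def)

lemma fm_elim_subset_row_cone:
  assumes "finite R"
  shows "fm_elim j R \<subseteq> row_cone R id"
proof
  fix r assume "r \<in> fm_elim j R"
  then consider "r \<in> R"
    | p n where "p \<in> R" "n \<in> R" "0 < fst p j" "fst n j < 0" "r = fm_combine j p n"
    by (auto simp: fm_elim_def)
  then show "r \<in> row_cone R id"
  proof cases
    case 1
    then show ?thesis
      using row_in_row_cone[OF assms, of r id] by simp
  next
    case 2
    then show ?thesis
      using row_cone_pair[OF assms, of p n "- fst n j" "fst p j" id] by (simp add: fm_combine_def)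
  qed
qed

lemma ineqs_solvable_fm_elim:
  fixes R :: "(('j \<Rightarrow> real) \<times> real) set"
  assumes "finite J" "finite R" "j \<notin> J" "ineqs_solvable J (fm_elim j R) id"
  shows "ineqs_solvable (insert j J) R id"
proof -
  obtain lam where lam: "\<And>r. r \<in> fm_elim j R \<Longrightarrow> (\<Sum>i\<in>J. fst r i * lam i) \<le> snd r"
    using assms(4) by (auto simp: ineqs_solvable_def)
  define Rp where "Rp = {p \<in> R. 0 < fst p j}"
  define Rn where "Rn = {n \<in> R. fst n j < 0}"
  define S where "S r = (\<Sum>i\<in>J. fst r i * lam i)" for r :: "('j \<Rightarrow> real) \<times> real"
  define bound where "bound r = (snd r - S r) / fst r j" for r
  \<comment> \<open>The eliminated rows say that each lower bound on \<open>lam j\<close> (rows in \<open>Rn\<close>) lies below each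
    upper bound (rows in \<open>Rp\<close>).\<close>
  have "bound n \<le> bound p" if "p \<in> Rp" "n \<in> Rn" for p n
  proof -
    have "fm_combine j p n \<in> fm_elim j R"
      using that by (auto simp: fm_elim_def Rp_def Rn_def)
    moreover have "(\<Sum>i\<in>J. fst (fm_combine j p n) i * lam i) = - fst n j * S p + fst p j * S n"
      by (simp add: fm_combine_def S_def sum.distrib[symmetric] sum_distrib_left sum_negf[symmetric]
          algebra_simps)
    ultimately have "0 \<le> - fst n j * (snd p - S p) + fst p j * (snd n - S n)"
      using lam by (fastforce simp: fm_combine_def algebra_simps)
    then show ?thesis
      using that by (simp add: bound_def Rp_def Rn_def field_simps)
  qed
  then have "\<exists>t. (\<forall>n\<in>Rn. bound n \<le> t) \<and> (\<forall>p\<in>Rp. t \<le> bound p)"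
    using assms(2) by (intro exists_between_finite) (simp_all add: Rp_def Rn_def)
  then obtain t where t_ge: "\<forall>n\<in>Rn. bound n \<le> t" and t_le: "\<forall>p\<in>Rp. t \<le> bound p"
    by (elim exE conjE)
  have "(\<Sum>i\<in>insert j J. fst r i * (lam(j := t)) i) \<le> snd r" if r: "r \<in> R" for r
  proof -
    have lhs: "(\<Sum>i\<in>insert j J. fst r i * (lam(j := t)) i) = fst r j * t + S r"
      using assms(1,3) unfolding S_def by (simp add: sum.insert) (auto intro!: sum.cong)
    consider "fst r j = 0" | "0 < fst r j" | "fst r j < 0"
      by linarith
    then show ?thesis
    proof cases
      case 1
      then have "r \<in> fm_elim j R"
        using r by (simp add: fm_elim_def)
      then show ?thesis
        using lam 1 lhs by (simp add: S_def)
    next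
      case 2
      then have "t \<le> bound r"
        using t_le r unfolding Rp_def by blast
      then show ?thesis
        using 2 lhs by (simp add: bound_def field_simps)
    next
      case 3
      then have "bound r \<le> t"
        using t_ge r unfolding Rn_def by blast
      then show ?thesis
        using 3 lhs by (simp add: bound_def field_simps)
    qed
  qed
  then show ?thesis
    unfolding ineqs_solvable_def by (intro exI[of _ "lam(j := t)"]) auto
qed

lemma farkas_rows:
  fixes R :: "(('j \<Rightarrow> real) \<times> real) set"
  assumes "finite J" "finite R" "\<not> ineqs_solvable J R id"
  shows "\<exists>c\<in>row_cone R id. (\<forall>j\<in>J. fst c j = 0) \<and> snd c < 0"
  using assms
proof (induction J arbitrary: R rule: finite_induct)
  case empty
  then obtain r where r: "r \<in> R" "snd r < 0"
    by (auto simp: ineqs_solvable_def not_le)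
  moreover have "r \<in> row_cone R id"
    using row_in_row_cone[OF \<open>finite R\<close> r(1), of id] by simp
  ultimately show ?case
    by blast
next
  case (insert j J)
  have "\<not> ineqs_solvable J (fm_elim j R) id"
    using ineqs_solvable_fm_elim[OF insert.hyps(1) insert.prems(1) insert.hyps(2)] insert.prems(2)
    by blast
  then obtain c where c: "c \<in> row_cone (fm_elim j R) id" "\<forall>i\<in>J. fst c i = 0" "snd c < 0"
    using insert.IH[OF finite_fm_elim[OF insert.prems(1)]] by blast
  have "fst c j = 0"
    using c(1) by (auto simp: row_cone_def fm_elim_coeff_eq_0)
  moreover have "c \<in> row_cone R id"
    using c(1) row_cone_trans[of "fm_elim j R" id R id] fm_elim_subset_row_cone[OF insert.prems(1)]
    by auto
  ultimately show ?case
    using c(2,3) by blast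
qed

lemma farkas_nonneg:
  fixes a :: "'k \<Rightarrow> 'j \<Rightarrow> real" and b :: "'k \<Rightarrow> real"
  assumes "finite J" "finite K"
    and "\<nexists>lam. (\<forall>j\<in>J. 0 \<le> lam j) \<and> (\<forall>k\<in>K. (\<Sum>j\<in>J. a k j * lam j) \<le> b k)"
  shows "\<exists>y. (\<forall>k\<in>K. 0 \<le> y k) \<and> (\<forall>j\<in>J. 0 \<le> (\<Sum>k\<in>K. y k * a k j)) \<and> (\<Sum>k\<in>K. y k * b k) < 0"
proof -
  \<comment> \<open>The rows \<open>Inr j\<close> encode the sign constraints \<open>- lam j \<le> 0\<close>.\<close>
  define row :: "'k + 'j \<Rightarrow> ('j \<Rightarrow> real) \<times> real" where
    "row = case_sum (\<lambda>k. (a k, b k)) (\<lambda>j. ((\<lambda>i. if i = j then -1 else 0), 0))"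
  define KJ where "KJ = Inl ` K \<union> Inr ` J"
  have finite_KJ: "finite KJ"
    using assms(1,2) by (simp add: KJ_def)
  have sum_KJ: "(\<Sum>x\<in>KJ. F x) = (\<Sum>k\<in>K. F (Inl k)) + (\<Sum>j\<in>J. F (Inr j))" for F :: "_ \<Rightarrow> real"
    unfolding KJ_def using assms(1,2) by (subst sum.union_disjoint) (auto simp: sum.reindex)
  have sum_unit: "(\<Sum>i\<in>J. f i * (if j = i then -1 else 0)) = - f j" if "j \<in> J"
    for f :: "'j \<Rightarrow> real" and j
    using that assms(1) by (simp add: if_distrib[of "\<lambda>x. _ * x"] sum.delta cong: if_cong)
  have "\<not> ineqs_solvable J (row ` KJ) id"
  proof
    assume "ineqs_solvable J (row ` KJ) id"
    then obtain lam where lam: "\<forall>x\<in>KJ. (\<Sum>i\<in>J. fst (row x) i * lam i) \<le> snd (row x)"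
      by (auto simp: ineqs_solvable_def)
    have "0 \<le> lam j" if "j \<in> J" for j
      using lam[rule_format, of "Inr j"] that assms(1)
      by (simp add: KJ_def row_def if_distrib[of "\<lambda>x. x * _"] sum.delta' cong: if_cong)
    moreover have "(\<Sum>j\<in>J. a k j * lam j) \<le> b k" if "k \<in> K" for k
      using lam[rule_format, of "Inl k"] that by (simp add: KJ_def row_def)
    ultimately show False
      using assms(3) by blast
  qed
  then obtain c where c: "c \<in> row_cone (row ` KJ) id" "\<forall>j\<in>J. fst c j = 0" "snd c < 0"
    using farkas_rows[OF assms(1)] finite_KJ by blast
  have "row_cone (row ` KJ) id \<subseteq> row_cone KJ row"
    using row_in_row_cone[OF finite_KJ, of _ row] by (intro row_cone_trans) auto
  with c obtain y where y: "\<forall>x\<in>KJ. 0 \<le> y x"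
    and y_coeff: "\<forall>j\<in>J. (\<Sum>x\<in>KJ. y x * fst (row x) j) = 0"
    and y_rhs: "(\<Sum>x\<in>KJ. y x * snd (row x)) < 0"
    by (auto simp: row_cone_def)
  show ?thesis
  proof (intro exI[of _ "y \<circ> Inl"] conjI ballI)
    show "0 \<le> (y \<circ> Inl) k" if "k \<in> K" for k
      using y that by (simp add: KJ_def)
    fix j assume "j \<in> J"
    then have "(\<Sum>k\<in>K. (y \<circ> Inl) k * a k j) = y (Inr j)"
      using y_coeff[rule_format, OF \<open>j \<in> J\<close>] sum_unit[OF \<open>j \<in> J\<close>, of "y \<circ> Inr"]
      by (simp add: sum_KJ row_def)
    then show "0 \<le> (\<Sum>k\<in>K. (y \<circ> Inl) k * a k j)"
      using y \<open>j \<in> J\<close> by (simp add: KJ_def)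
  next
    show "(\<Sum>k\<in>K. (y \<circ> Inl) k * b k) < 0"
      using y_rhs by (simp add: sum_KJ row_def)
  qed
qed

section \<open>Implementable flows\<close>

lemma finite_paths:
  assumes "finite V" "E \<subseteq> V \<times> V" "s \<in> V"
  shows "finite (paths E s t)"
proof (rule finite_subset)
  show "paths E s t \<subseteq> {xs. set xs \<subseteq> V \<and> length xs \<le> card V}"
  proof
    fix p assume "p \<in> paths E s t"
    then have p: "p \<noteq> []" "hd p = s" "distinct p" "\<forall>k. Suc k < length p \<longrightarrow> (p ! k, p ! Suc k) \<in> E"
      by (auto simp: paths_def simple_path_def)
    have "p ! k \<in> V" if "k < length p" for k
    proof (cases k)
      case 0
      then show ?thesis
        using p(1,2) assms(3) by (simp add: hd_conv_nth)
    next
      case (Suc k')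
      then have "(p ! k', p ! k) \<in> E"
        using p(4) that by simp
      then show ?thesis
        using assms(2) by blast
    qed
    then have "set p \<subseteq> V"
      by (auto simp: in_set_conv_nth)
    moreover have "length p \<le> card V"
      using distinct_card[OF p(3)] card_mono[OF assms(1) \<open>set p \<subseteq> V\<close>] by simp
    ultimately show "p \<in> {xs. set xs \<subseteq> V \<and> length xs \<le> card V}"
      by blast
  qed
  show "finite {xs. set xs \<subseteq> V \<and> length xs \<le> card V}"
    using finite_lists_length_le[OF assms(1)] .
qed

lemma Pset_eq_Sigma: "Pset I E s t = (SIGMA i:I. paths E (s i) (t i))"
  by (auto simp: Pset_def)

lemma finite_Pset:
  "finite I \<Longrightarrow> \<forall>i\<in>I. finite (paths E (s i) (t i)) \<Longrightarrow> finite (Pset I E s t)"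
  by (simp add: Pset_eq_Sigma)

lemma sum_Pset:
  assumes "finite I" "\<forall>i\<in>I. finite (paths E (s i) (t i))"
  shows "(\<Sum>ip\<in>Pset I E s t. F ip) = (\<Sum>i\<in>I. \<Sum>p\<in>paths E (s i) (t i). F (i, p))"
  using assms by (simp add: Pset_eq_Sigma sum.Sigma)

lemma sum_cost:
  "(\<Sum>ip\<in>P. cost J tau g lam ip x * y ip) =
     (\<Sum>ip\<in>P. tau ip x * y ip) + (\<Sum>j\<in>J. lam j * (\<Sum>ip\<in>P. g ip j x * y ip))"
proof -
  have "(\<Sum>ip\<in>P. cost J tau g lam ip x * y ip) =
      (\<Sum>ip\<in>P. tau ip x * y ip + (\<Sum>j\<in>J. lam j * (g ip j x * y ip)))"
    by (intro sum.cong refl) (simp add: cost_def distrib_right sum_distrib_right mult.assoc)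
  also have "\<dots> = (\<Sum>ip\<in>P. tau ip x * y ip) + (\<Sum>j\<in>J. lam j * (\<Sum>ip\<in>P. g ip j x * y ip))"
    by (simp add: sum.distrib sum_distrib_left sum.swap[of _ P J])
  finally show ?thesis .
qed

lemma sum_mult_le_if_supported_on_minimizers:
  fixes c u x :: "'a \<Rightarrow> real"
  assumes "finite A" "\<forall>a\<in>A. 0 \<le> u a" "\<forall>a\<in>A. 0 \<le> x a" "sum u A = sum x A"
    and min: "\<forall>p\<in>A. 0 < u p \<longrightarrow> (\<forall>q\<in>A. c p \<le> c q)"
  shows "(\<Sum>a\<in>A. c a * u a) \<le> (\<Sum>a\<in>A. c a * x a)"
proof (cases "\<exists>p\<in>A. 0 < u p")
  case True
  then obtain p where p: "p \<in> A" "0 < u p"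
    by blast
  have "(\<Sum>a\<in>A. c a * u a) = (\<Sum>a\<in>A. c p * u a)"
  proof (rule sum.cong[OF refl])
    fix a assume "a \<in> A"
    then show "c a * u a = c p * u a"
      using assms(2) min p by (cases "0 < u a") (auto intro: antisym)
  qed
  also have "\<dots> = (\<Sum>a\<in>A. c p * x a)"
    by (simp add: sum_distrib_left[symmetric] assms(4))
  also have "\<dots> \<le> (\<Sum>a\<in>A. c a * x a)"
    using assms(3) min p by (intro sum_mono mult_right_mono) auto
  finally show ?thesis .
next
  case False
  then have "\<forall>a\<in>A. u a = 0"
    using assms(2) by force
  moreover from this have "sum x A = 0"
    using assms(4) by simp
  then have "\<forall>a\<in>A. x a = 0"
    using sum_nonneg_eq_0_iff[OF assms(1)] assms(3) by blast
  ultimately show ?thesis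
    by simp
qed

lemma lp_optimal_if_wardrop:
  assumes "finite I" "\<forall>i\<in>I. finite (paths E (s i) (t i))"
    and "\<forall>j\<in>J. 0 \<le> lam j" and W: "wardrop I E s t d J tau g lam u"
  shows "lp_optimal I E s t d J tau g u"
proof -
  define P where "P = Pset I E s t"
  define c where "c ip = cost J tau g lam ip u" for ip
  have fu: "feasible I E s t d u"
    using W by (simp add: wardrop_def)
  have "(\<Sum>ip\<in>P. tau ip u * u ip) \<le> (\<Sum>ip\<in>P. tau ip u * x ip)"
    if fx: "feasible I E s t d x" and cx: "\<forall>j\<in>J. (\<Sum>ip\<in>P. g ip j u * x ip) \<le> Gext P g j u" for x
  proof -
    have "(\<Sum>ip\<in>P. c ip * u ip) \<le> (\<Sum>ip\<in>P. c ip * x ip)"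
      unfolding P_def sum_Pset[OF assms(1,2)]
    proof (rule sum_mono)
      fix i assume "i \<in> I"
      then show "(\<Sum>p\<in>paths E (s i) (t i). c (i, p) * u (i, p)) \<le>
          (\<Sum>p\<in>paths E (s i) (t i). c (i, p) * x (i, p))"
        using fu fx W assms(2)
        by (intro sum_mult_le_if_supported_on_minimizers[of _ "\<lambda>p. u (i, p)" "\<lambda>p. x (i, p)"])
          (auto simp: feasible_def wardrop_def Pset_def c_def)
    qed
    moreover have "lam j * (\<Sum>ip\<in>P. g ip j u * x ip) \<le> lam j * (\<Sum>ip\<in>P. g ip j u * u ip)"
      if "j \<in> J" for j
      using assms(3) cx that by (intro mult_left_mono) (auto simp: Gext_def)
    then have "(\<Sum>j\<in>J. lam j * (\<Sum>ip\<in>P. g ip j u * x ip)) \<le>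
        (\<Sum>j\<in>J. lam j * (\<Sum>ip\<in>P. g ip j u * u ip))"
      by (rule sum_mono)
    ultimately show ?thesis
      unfolding c_def sum_cost by linarith
  qed
  with fu show ?thesis
    unfolding lp_optimal_def Let_def P_def Gext_def by auto
qed

definition path_shift :: "('i \<times> 'p \<times> 'p) set \<Rightarrow> ('i \<times> 'p \<times> 'p \<Rightarrow> real) \<Rightarrow> 'i \<times> 'p \<Rightarrow> real" where
  "path_shift T v ip =
     (\<Sum>(i, p, q)\<in>T.
        v (i, p, q) * ((if ip = (i, q) then 1 else 0) - (if ip = (i, p) then 1 else 0)))"

lemma sum_path_shift:
  assumes "finite A" "\<forall>(i, p, q)\<in>T. (i, p) \<in> A \<and> (i, q) \<in> A"
  shows "(\<Sum>x\<in>A. h x * path_shift T v x) = (\<Sum>(i, p, q)\<in>T. v (i, p, q) * (h (i, q) - h (i, p)))"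
proof -
  have unit: "(\<Sum>x\<in>A. h x * (c * (if x = a then 1 else 0))) = c * h a" if "a \<in> A" for a c
    using that assms(1)
    by (simp add: if_distrib[of "\<lambda>y. _ * y"] sum.delta mult.commute cong: if_cong)
  have "(\<Sum>x\<in>A. h x * path_shift T v x) =
      (\<Sum>k\<in>T. \<Sum>x\<in>A. h x * (case k of (i, p, q) \<Rightarrow>
         v (i, p, q) * ((if x = (i, q) then 1 else 0) - (if x = (i, p) then 1 else 0))))"
    unfolding path_shift_def sum_distrib_left by (rule sum.swap)
  also have "\<dots> = (\<Sum>(i, p, q)\<in>T. v (i, p, q) * (h (i, q) - h (i, p)))"
  proof (rule sum.cong[OF refl], clarify)
    fix i p q assume "(i, p, q) \<in> T"
    then have "(i, p) \<in> A" "(i, q) \<in> A"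
      using assms(2) by auto
    then show "(\<Sum>x\<in>A. h x *
          (v (i, p, q) * ((if x = (i, q) then 1 else 0) - (if x = (i, p) then 1 else 0)))) =
        v (i, p, q) * (h (i, q) - h (i, p))"
      by (simp add: right_diff_distrib sum_subtractf unit)
  qed
  finally show ?thesis .
qed

lemma feasible_add_path_shift:
  assumes "finite I" "\<forall>i\<in>I. finite (paths E (s i) (t i))" and fu: "feasible I E s t d u"
    and T: "T \<subseteq> {(i, p, q). i \<in> I \<and> p \<in> paths E (s i) (t i) \<and> q \<in> paths E (s i) (t i) \<and>
      0 < u (i, p)}"
    and v: "\<forall>x\<in>T. 0 \<le> v x"
  shows "\<exists>\<epsilon>>0. feasible I E s t d (\<lambda>ip. u ip + \<epsilon> * path_shift T v ip)"
proof -
  define P where "P = Pset I E s t"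
  define \<delta> where "\<delta> = path_shift T v"
  have finite_P: "finite P"
    unfolding P_def using assms(1,2) by (rule finite_Pset)
  have T_P: "\<forall>(i, p, q)\<in>T. (i, p) \<in> P \<and> (i, q) \<in> P"
    using T by (auto simp: P_def Pset_def)
  have \<delta>_outside: "\<delta> ip = 0" if "ip \<notin> P" for ip
    unfolding \<delta>_def path_shift_def using T_P that by (intro sum.neutral) auto
  have \<delta>_nonneg: "0 \<le> \<delta> ip" if "\<not> 0 < u ip" for ip
    unfolding \<delta>_def path_shift_def using T v that by (intro sum_nonneg) auto
  have \<delta>_demand: "(\<Sum>p\<in>paths E (s i) (t i). \<delta> (i, p)) = 0" if "i \<in> I" for i
  proof -
    have "(\<Sum>p\<in>paths E (s i) (t i). \<delta> (i, p)) =
        (\<Sum>i'\<in>I. if i' = i then (\<Sum>p\<in>paths E (s i') (t i'). \<delta> (i', p)) else 0)"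
      using that assms(1) by simp
    also have "\<dots> = (\<Sum>ip\<in>P. (if fst ip = i then 1 else 0) * \<delta> ip)"
      unfolding P_def sum_Pset[OF assms(1,2)] by (intro sum.cong) auto
    also have "\<dots> = 0"
      unfolding \<delta>_def sum_path_shift[OF finite_P T_P] by (simp add: case_prod_beta)
    finally show ?thesis .
  qed
  have "\<forall>\<^sub>F \<epsilon> in at_right 0. \<forall>ip\<in>P. 0 \<le> u ip + \<epsilon> * \<delta> ip"
  proof (rule eventually_ball_finite[OF finite_P], rule ballI)
    fix ip assume "ip \<in> P"
    show "\<forall>\<^sub>F \<epsilon> in at_right 0. 0 \<le> u ip + \<epsilon> * \<delta> ip"
    proof (cases "0 < u ip")
      case True
      have "((\<lambda>\<epsilon>. u ip + \<epsilon> * \<delta> ip) \<longlongrightarrow> u ip) (at_right 0)"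
        by (auto intro!: tendsto_eq_intros)
      from order_tendstoD(1)[OF this True] show ?thesis
        by (rule eventually_mono) simp
    next
      case False
      then have "u ip = 0"
        using fu \<open>ip \<in> P\<close> by (auto simp: feasible_def P_def)
      then show ?thesis
        using \<delta>_nonneg[OF False] eventually_at_right_less[of 0] by (auto elim: eventually_mono)
    qed
  qed
  then have "\<forall>\<^sub>F \<epsilon> in at_right 0. 0 < \<epsilon> \<and> (\<forall>ip\<in>P. 0 \<le> u ip + \<epsilon> * \<delta> ip)"
    by (simp add: eventually_conj_iff eventually_at_right_less)
  from eventually_happens'[OF trivial_limit_at_right_real this]
  obtain \<epsilon> where "0 < \<epsilon>" and nonneg: "\<forall>ip\<in>P. 0 \<le> u ip + \<epsilon> * \<delta> ip"
    by blast
  have "feasible I E s t d (\<lambda>ip. u ip + \<epsilon> * \<delta> ip)"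
    using fu nonneg \<delta>_outside \<delta>_demand
    by (auto simp: feasible_def P_def sum.distrib sum_distrib_left[symmetric])
  with \<open>0 < \<epsilon>\<close> show ?thesis
    unfolding \<delta>_def by blast
qed

lemma implementable_if_lp_optimal:
  assumes "finite I" "\<forall>i\<in>I. finite (paths E (s i) (t i))" "finite J"
    and opt: "lp_optimal I E s t d J tau g u"
  shows "implementable I E s t d J tau g u"
proof (rule ccontr)
  assume not_impl: "\<not> implementable I E s t d J tau g u"
  define P where "P = Pset I E s t"
  define T where
    "T = {(i, p, q). i \<in> I \<and> p \<in> paths E (s i) (t i) \<and> q \<in> paths E (s i) (t i) \<and> 0 < u (i, p)}"
  have fu: "feasible I E s t d u"
    using opt by (simp add: lp_optimal_def Let_def)
  have finite_T: "finite T"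
  proof (rule finite_subset)
    show "T \<subseteq> (SIGMA i:I. paths E (s i) (t i) \<times> paths E (s i) (t i))"
      by (auto simp: T_def)
    show "finite (SIGMA i:I. paths E (s i) (t i) \<times> paths E (s i) (t i))"
      using assms(1,2) by auto
  qed
  have T_P: "\<forall>(i, p, q)\<in>T. (i, p) \<in> P \<and> (i, q) \<in> P"
    by (auto simp: T_def P_def Pset_def)
  have "\<nexists>lam. (\<forall>j\<in>J. 0 \<le> lam j) \<and>
      (\<forall>k\<in>T. (\<Sum>j\<in>J. (case k of (i, p, q) \<Rightarrow> g (i, p) j u - g (i, q) j u) * lam j)
                 \<le> (case k of (i, p, q) \<Rightarrow> tau (i, q) u - tau (i, p) u))"
    (is "\<nexists>lam. ?nonneg lam \<and> ?cheapest lam")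
  proof (rule notI, elim exE conjE)
    fix lam assume lam: "?nonneg lam" and cheapest: "?cheapest lam"
    have "cost J tau g lam (i, p) u \<le> cost J tau g lam (i, q) u" if "(i, p, q) \<in> T" for i p q
      using cheapest that by (force simp: cost_def sum_subtractf algebra_simps)
    then have "wardrop I E s t d J tau g lam u"
      using fu by (auto simp: wardrop_def T_def)
    with lam not_impl show False
      by (auto simp: implementable_def)
  qed
  then obtain v where v: "\<forall>k\<in>T. 0 \<le> v k"
    and v_g: "\<forall>j\<in>J. 0 \<le> (\<Sum>k\<in>T. v k * (case k of (i, p, q) \<Rightarrow> g (i, p) j u - g (i, q) j u))"
    and v_tau: "(\<Sum>k\<in>T. v k * (case k of (i, p, q) \<Rightarrow> tau (i, q) u - tau (i, p) u)) < 0"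
    using farkas_nonneg[OF assms(3) finite_T,
        where a = "\<lambda>k j. case k of (i, p, q) \<Rightarrow> g (i, p) j u - g (i, q) j u"
          and b = "\<lambda>k. case k of (i, p, q) \<Rightarrow> tau (i, q) u - tau (i, p) u"]
    by blast
  define gain where "gain h = (\<Sum>(i, p, q)\<in>T. v (i, p, q) * (h (i, q) - h (i, p)))" for h
  have gain_g: "gain (\<lambda>ip. g ip j u) \<le> 0" if "j \<in> J" for j
    using v_g[rule_format, OF that]
    by (simp add: gain_def case_prod_beta right_diff_distrib sum_subtractf)
  have gain_tau: "gain (\<lambda>ip. tau ip u) < 0"
    using v_tau by (simp add: gain_def case_prod_beta)
  obtain \<epsilon> where "0 < \<epsilon>" and fx: "feasible I E s t d (\<lambda>ip. u ip + \<epsilon> * path_shift T v ip)"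
    using feasible_add_path_shift[OF assms(1,2) fu, of T v] v by (auto simp: T_def)
  define x where "x ip = u ip + \<epsilon> * path_shift T v ip" for ip
  have sum_x: "(\<Sum>ip\<in>P. h ip * x ip) = (\<Sum>ip\<in>P. h ip * u ip) + \<epsilon> * gain h" for h
  proof -
    have "(\<Sum>ip\<in>P. h ip * x ip) = (\<Sum>ip\<in>P. h ip * u ip) + \<epsilon> * (\<Sum>ip\<in>P. h ip * path_shift T v ip)"
      by (simp add: x_def algebra_simps sum.distrib sum_distrib_left)
    also have "(\<Sum>ip\<in>P. h ip * path_shift T v ip) = gain h"
      unfolding gain_def P_def
      by (rule sum_path_shift[OF finite_Pset[OF assms(1,2)] T_P[unfolded P_def]])
    finally show ?thesis .
  qed
  have "\<forall>j\<in>J. (\<Sum>ip\<in>P. g ip j u * x ip) \<le> Gext P g j u"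
    using gain_g \<open>0 < \<epsilon>\<close> by (simp add: sum_x Gext_def mult_nonneg_nonpos)
  with opt fx have "(\<Sum>ip\<in>P. tau ip u * u ip) \<le> (\<Sum>ip\<in>P. tau ip u * x ip)"
    unfolding lp_optimal_def Let_def P_def x_def by blast
  then show False
    using mult_pos_neg[OF \<open>0 < \<epsilon>\<close> gain_tau] by (simp add: sum_x)
qed

theorem theorem3p2:
  fixes V :: "'v set" and E :: "('v \<times> 'v) set"
    and I :: "'i set" and s t :: "'i \<Rightarrow> 'v" and d :: "'i \<Rightarrow> real"
    and J :: "'j set"
    and tau :: "'i \<times> 'v list \<Rightarrow> ('i \<times> 'v list \<Rightarrow> real) \<Rightarrow> real"
    and g :: "'i \<times> 'v list \<Rightarrow> 'j \<Rightarrow> ('i \<times> 'v list \<Rightarrow> real) \<Rightarrow> real"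
    and u :: "'i \<times> 'v list \<Rightarrow> real"
  assumes "finite V" and "E \<subseteq> V \<times> V"
    and "finite I" and "\<forall>i \<in> I. s i \<in> V \<and> t i \<in> V" and "\<forall>i \<in> I. d i > 0"
    and "finite J"
    and "\<forall>x. feasible I E s t d x \<longrightarrow> (\<forall>ip \<in> Pset I E s t. \<forall>j \<in> J. g ip j x \<ge> 0)"
    and "feasible I E s t d u"
  shows "implementable I E s t d J tau g u \<longleftrightarrow> lp_optimal I E s t d J tau g u"
proof
  have finite_paths_I: "\<forall>i\<in>I. finite (paths E (s i) (t i))"
    using finite_paths[OF assms(1,2)] assms(4) by blast
  show "lp_optimal I E s t d J tau g u" if "implementable I E s t d J tau g u"
    using that lp_optimal_if_wardrop[OF assms(3) finite_paths_I] by (auto simp: implementable_def)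
  show "implementable I E s t d J tau g u" if "lp_optimal I E s t d J tau g u"
    using implementable_if_lp_optimal[OF assms(3) finite_paths_I assms(6) that] .
qed

end
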